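(* Let $X$ be a set and $\beta_P\in\Im(P(X))$. Then there exists a fuzzifying topology $T\in\Im(P(X))$ on $X$ such that $\beta_P$ is a pre-base of $T$ if and only if the following two conditions hold: (1) $\beta_P^{(\cup)}(X)=1$, where $\beta_P^{(\cup)}(A)=\bigvee\{\bigwedge_{\lambda\in\Lambda}\beta_P(B_\lambda):\bigcup_{\lambda\in\Lambda}B_\lambda=A\}$; (2) for all $A,B\subseteq X$ and all $x\in A\cap B$, $\min(\beta_P(A),\beta_P(B))\le\sup\{\beta_P(C): x\in C\subseteq A\cap B\}$.
   Context: $\Im(Y)$ denotes the fuzzy subsets $Y\to[0,1]$ and $P(X)$ the power set. A fuzzifying topology on $X$ is $T\in\Im(P(X))$ with $T(X)=1$, $T(A\cap B)\ge\min(T(A),T(B))$ and $T(\bigcup_\lambda A_\lambda)\ge\inf_\lambda T(A_\lambda)$ for arbitrary families. Here $\beta_P$ is called a pre-base of $T$ if $\beta_P(A)\le T(A)$ for all $A$ and, for all $x\in X$ and $A\subseteq X$, $\sup_{x\in B\subseteq A}T(B)\le\sup_{x\in B\subseteq A}\beta_P(B)$. (Condition (2) is the Łukasiewicz-valid formula $\vDash (A\in\beta_P)\wedge(B\in\beta_P)\wedge(x\in A\cap B)\to\exists C((C\in\beta_P)\wedge(x\in C\subseteq A\cap B))$, where $[\varphi\wedge\psi]=\min$, $[\exists]=\sup$, $[\varphi\to\psi]=\min(1,1-[\varphi]+[\psi])$ and $\vDash$ means truth value $1$.) *)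

theory Defs
  imports Complex_Main
begin

text \<open>Fuzzy subsets of P(X) are modelled as functions 'a set => real whose values on
  subsets of the carrier X lie in [0,1]; values outside Pow X are irrelevant.\<close>

definition fuzzy_subset_pow :: "'a set \<Rightarrow> ('a set \<Rightarrow> real) \<Rightarrow> bool" where
  "fuzzy_subset_pow X f \<longleftrightarrow> (\<forall>A. A \<subseteq> X \<longrightarrow> 0 \<le> f A \<and> f A \<le> 1)"

text \<open>Infimum and supremum in the complete lattice [0,1] (empty inf = 1, empty sup = 0).\<close>

definition finf :: "real set \<Rightarrow> real" where
  "finf S = Inf (insert 1 S)"

definition fsup :: "real set \<Rightarrow> real" where
  "fsup S = Sup (insert 0 S)"

definition fuzzifying_topology :: "'a set \<Rightarrow> ('a set \<Rightarrow> real) \<Rightarrow> bool" where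
  "fuzzifying_topology X T \<longleftrightarrow>
     fuzzy_subset_pow X T \<and>
     T X = 1 \<and>
     (\<forall>A B. A \<subseteq> X \<longrightarrow> B \<subseteq> X \<longrightarrow> min (T A) (T B) \<le> T (A \<inter> B)) \<and>
     (\<forall>F. F \<subseteq> Pow X \<longrightarrow> finf (T ` F) \<le> T (\<Union>F))"

definition pre_base :: "'a set \<Rightarrow> ('a set \<Rightarrow> real) \<Rightarrow> ('a set \<Rightarrow> real) \<Rightarrow> bool" where
  "pre_base X \<beta> T \<longleftrightarrow>
     (\<forall>A. A \<subseteq> X \<longrightarrow> \<beta> A \<le> T A) \<and>
     (\<forall>x A. x \<in> X \<longrightarrow> A \<subseteq> X \<longrightarrow>
        fsup {T B | B. x \<in> B \<and> B \<subseteq> A} \<le> fsup {\<beta> B | B. x \<in> B \<and> B \<subseteq> A})"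

definition union_closure :: "'a set \<Rightarrow> ('a set \<Rightarrow> real) \<Rightarrow> 'a set \<Rightarrow> real" where
  "union_closure X \<beta> A = fsup {finf (\<beta> ` F) | F. F \<subseteq> Pow X \<and> \<Union>F = A}"

end

theory Submission
  imports Defs
begin

text \<open>Write \<open>N\<^sub>f(x, A)\<close> for the degree to which some \<open>f\<close>-set lies between \<open>x\<close> and \<open>A\<close>.
  The pre-base condition says exactly \<open>N\<^sub>T \<le> N\<^sub>\<beta>\<close>, and condition (1) says \<open>N\<^sub>\<beta>(x, X) = 1\<close>
  for every \<open>x \<in> X\<close>. Necessity follows from \<open>\<beta> \<le> T\<close>, the intersection axiom of \<open>T\<close>
  and \<open>T A \<le> N\<^sub>T(x, A)\<close> for \<open>x \<in> A\<close>. For sufficiency take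
  \<open>T A = inf\<^sub>x\<^sub>\<in>\<^sub>A N\<^sub>\<beta>(x, A)\<close>: condition (2) makes \<open>N\<^sub>\<beta>(x, -)\<close> preserve binary meets,
  which gives the intersection axiom, and monotonicity of \<open>N\<^sub>\<beta>(x, -)\<close> gives the union axiom.\<close>

lemma fsup_upper: "\<forall>s\<in>S. s \<le> 1 \<Longrightarrow> s \<in> S \<Longrightarrow> s \<le> fsup S"
  unfolding fsup_def by (rule cSup_upper) (auto intro!: bdd_aboveI[where M = 1])

lemma fsup_least: "\<forall>s\<in>S. s \<le> c \<Longrightarrow> 0 \<le> c \<Longrightarrow> fsup S \<le> (c::real)"
  unfolding fsup_def by (rule cSup_least) auto

lemma fsup_nonneg: "\<forall>s\<in>S. s \<le> 1 \<Longrightarrow> 0 \<le> fsup S"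
  unfolding fsup_def by (rule cSup_upper) (auto intro!: bdd_aboveI[where M = 1])

lemma less_fsupD: "\<forall>s\<in>S. s \<le> 1 \<Longrightarrow> c < fsup S \<Longrightarrow> 0 \<le> c \<Longrightarrow> \<exists>s\<in>S. c < s"
  unfolding fsup_def by (subst (asm) less_cSup_iff) (auto intro!: bdd_aboveI[where M = 1])

lemma finf_lower: "\<forall>s\<in>S. 0 \<le> s \<Longrightarrow> s \<in> S \<Longrightarrow> finf S \<le> s"
  unfolding finf_def by (rule cInf_lower) (auto intro!: bdd_belowI[where m = 0])

lemma finf_greatest: "\<forall>s\<in>S. c \<le> s \<Longrightarrow> c \<le> 1 \<Longrightarrow> (c::real) \<le> finf S"
  unfolding finf_def by (rule cInf_greatest) auto

lemma finf_le_one: "\<forall>s\<in>S. 0 \<le> s \<Longrightarrow> finf S \<le> 1"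
  unfolding finf_def by (rule cInf_lower) (auto intro!: bdd_belowI[where m = 0])

lemma finf_nonneg: "\<forall>s\<in>S. 0 \<le> s \<Longrightarrow> 0 \<le> finf S"
  by (rule finf_greatest) auto

definition nbhd_degree :: "('a set \<Rightarrow> real) \<Rightarrow> 'a \<Rightarrow> 'a set \<Rightarrow> real" where
  "nbhd_degree f x A = fsup {f B | B. x \<in> B \<and> B \<subseteq> A}"

lemma pre_base_iff_nbhd_degree:
  "pre_base X \<beta> T \<longleftrightarrow>
     (\<forall>A. A \<subseteq> X \<longrightarrow> \<beta> A \<le> T A) \<and>
     (\<forall>x A. x \<in> X \<longrightarrow> A \<subseteq> X \<longrightarrow> nbhd_degree T x A \<le> nbhd_degree \<beta> x A)"
  unfolding pre_base_def nbhd_degree_def ..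

context
  fixes X :: "'a set" and f :: "'a set \<Rightarrow> real"
  assumes fuzzy: "fuzzy_subset_pow X f"
begin

lemma fuzzy_subset_pow_bounds: "A \<subseteq> X \<Longrightarrow> 0 \<le> f A \<and> f A \<le> 1"
  using fuzzy unfolding fuzzy_subset_pow_def by blast

lemma nbhd_degree_values_le_one: "A \<subseteq> X \<Longrightarrow> \<forall>s\<in>{f B | B. x \<in> B \<and> B \<subseteq> A}. s \<le> 1"
  using fuzzy_subset_pow_bounds by auto

lemma nbhd_degree_bounds: "A \<subseteq> X \<Longrightarrow> 0 \<le> nbhd_degree f x A \<and> nbhd_degree f x A \<le> 1"
  unfolding nbhd_degree_def
  by (simp add: fsup_nonneg fsup_least nbhd_degree_values_le_one)

lemma nbhd_degree_upper: "A \<subseteq> X \<Longrightarrow> x \<in> B \<Longrightarrow> B \<subseteq> A \<Longrightarrow> f B \<le> nbhd_degree f x A"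
  unfolding nbhd_degree_def by (rule fsup_upper[OF nbhd_degree_values_le_one]) auto

lemma nbhd_degree_mono: "A \<subseteq> A' \<Longrightarrow> A' \<subseteq> X \<Longrightarrow> nbhd_degree f x A \<le> nbhd_degree f x A'"
  unfolding nbhd_degree_def[of f x A]
  by (rule fsup_least) (auto intro: nbhd_degree_upper simp: nbhd_degree_bounds)

lemma less_nbhd_degreeE:
  assumes "A \<subseteq> X" "c < nbhd_degree f x A" "0 \<le> c"
  obtains B where "x \<in> B" "B \<subseteq> A" "c < f B"
  using less_fsupD[OF nbhd_degree_values_le_one[OF assms(1)]] assms(2,3)
  unfolding nbhd_degree_def by blast

lemma union_closure_eq_one_iff:
  "union_closure X f X = 1 \<longleftrightarrow> (\<forall>x\<in>X. nbhd_degree f x X = 1)"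
proof -
  let ?U = "{finf (f ` F) | F. F \<subseteq> Pow X \<and> \<Union>F = X}"
  have U_le_one: "\<forall>s\<in>?U. s \<le> 1"
    using fuzzy_subset_pow_bounds by (auto intro!: finf_le_one)
  have U_le_nbhd: "s \<le> nbhd_degree f x X" if "s \<in> ?U" "x \<in> X" for s x
  proof -
    from that obtain F B where "s = finf (f ` F)" "F \<subseteq> Pow X" "B \<in> F" "x \<in> B"
      by blast
    then have "s \<le> f B" "f B \<le> nbhd_degree f x X"
      by (auto intro!: finf_lower nbhd_degree_upper simp: fuzzy_subset_pow_bounds)
    then show ?thesis by linarith
  qed
  show ?thesis
  proof
    assume U: "union_closure X f X = 1"
    show "\<forall>x\<in>X. nbhd_degree f x X = 1"
    proof (intro ballI antisym)
      fix x assume "x \<in> X"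
      show "nbhd_degree f x X \<le> 1" by (simp add: nbhd_degree_bounds)
      have "union_closure X f X \<le> nbhd_degree f x X"
        unfolding union_closure_def
        using U_le_nbhd \<open>x \<in> X\<close> by (intro fsup_least) (auto simp: nbhd_degree_bounds)
      then show "1 \<le> nbhd_degree f x X" using U by simp
    qed
  next
    assume N: "\<forall>x\<in>X. nbhd_degree f x X = 1"
    define u where "u = union_closure X f X"
    have u_le_one: "u \<le> 1"
      unfolding u_def union_closure_def by (rule fsup_least[OF U_le_one]) simp
    have u_nonneg: "0 \<le> u"
      unfolding u_def union_closure_def by (rule fsup_nonneg[OF U_le_one])
    have le_u: "c \<le> u" if "0 \<le> c" "c < 1" for c
    proof -
      have "\<exists>B. x \<in> B \<and> B \<subseteq> X \<and> c < f B" if "x \<in> X" for x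
      proof -
        have "c < nbhd_degree f x X" using N that \<open>c < 1\<close> by simp
        then obtain B where "x \<in> B" "B \<subseteq> X" "c < f B"
          using less_nbhd_degreeE[of X c x] \<open>0 \<le> c\<close> by blast
        then show ?thesis by blast
      qed
      then obtain B where B: "\<And>x. x \<in> X \<Longrightarrow> x \<in> B x \<and> B x \<subseteq> X \<and> c < f (B x)"
        by metis
      have "c \<le> finf (f ` B ` X)"
        using B \<open>c < 1\<close> by (intro finf_greatest) (auto simp: less_imp_le)
      also have "\<dots> \<le> u"
        unfolding u_def union_closure_def using B by (intro fsup_upper[OF U_le_one]) blast
      finally show ?thesis .
    qed
    have "1 \<le> u"
    proof (rule dense_le)
      fix c :: real assume "c < 1"
      show "c \<le> u"
      proof (cases "0 \<le> c")
        case True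
        with le_u \<open>c < 1\<close> show ?thesis by blast
      next
        case False
        with u_nonneg show ?thesis by linarith
      qed
    qed
    then show "union_closure X f X = 1"
      unfolding u_def[symmetric] using u_le_one by (rule antisym[rotated])
  qed
qed

end

lemma fuzzifying_topologyD:
  assumes "fuzzifying_topology X T"
  shows fuzzifying_topology_fuzzy: "fuzzy_subset_pow X T"
    and fuzzifying_topology_carrier: "T X = 1"
    and fuzzifying_topology_Int: "A \<subseteq> X \<Longrightarrow> B \<subseteq> X \<Longrightarrow> min (T A) (T B) \<le> T (A \<inter> B)"
  using assms unfolding fuzzifying_topology_def by blast+

lemma pre_baseD:
  assumes "pre_base X \<beta> T"
  shows pre_base_le: "A \<subseteq> X \<Longrightarrow> \<beta> A \<le> T A"
    and pre_base_nbhd_degree_le: "x \<in> X \<Longrightarrow> A \<subseteq> X \<Longrightarrow> nbhd_degree T x A \<le> nbhd_degree \<beta> x A"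
  using assms unfolding pre_base_iff_nbhd_degree by blast+

lemma fuzzifying_topology_le_nbhd_degree:
  assumes "fuzzifying_topology X T" "A \<subseteq> X" "x \<in> A"
  shows "T A \<le> nbhd_degree T x A"
  by (rule nbhd_degree_upper[OF fuzzifying_topology_fuzzy[OF assms(1)] assms(2,3) order_refl])

lemma pre_base_nbhd_degree_carrier:
  assumes "fuzzy_subset_pow X \<beta>" "fuzzifying_topology X T" "pre_base X \<beta> T" "x \<in> X"
  shows "nbhd_degree \<beta> x X = 1"
proof -
  have "1 = T X"
    by (rule fuzzifying_topology_carrier[OF assms(2), symmetric])
  also have "\<dots> \<le> nbhd_degree T x X"
    by (rule fuzzifying_topology_le_nbhd_degree[OF assms(2) order_refl assms(4)])
  also have "\<dots> \<le> nbhd_degree \<beta> x X"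
    by (rule pre_base_nbhd_degree_le[OF assms(3,4) order_refl])
  finally show ?thesis
    using nbhd_degree_bounds[OF assms(1) order_refl, of x] by (auto intro: antisym)
qed

lemma pre_base_min_le_nbhd_degree_Int:
  assumes "fuzzifying_topology X T" "pre_base X \<beta> T" "A \<subseteq> X" "B \<subseteq> X" "x \<in> A \<inter> B"
  shows "min (\<beta> A) (\<beta> B) \<le> nbhd_degree \<beta> x (A \<inter> B)"
proof -
  have "min (\<beta> A) (\<beta> B) \<le> min (T A) (T B)"
    using pre_base_le[OF assms(2,3)] pre_base_le[OF assms(2,4)] by (rule min.mono)
  also have "\<dots> \<le> T (A \<inter> B)"
    by (rule fuzzifying_topology_Int[OF assms(1,3,4)])
  also have "\<dots> \<le> nbhd_degree T x (A \<inter> B)"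
    using assms(3,5) by (intro fuzzifying_topology_le_nbhd_degree[OF assms(1)]) auto
  also have "\<dots> \<le> nbhd_degree \<beta> x (A \<inter> B)"
    using assms(3,5) by (intro pre_base_nbhd_degree_le[OF assms(2)]) auto
  finally show ?thesis .
qed

definition generated_topology :: "('a set \<Rightarrow> real) \<Rightarrow> 'a set \<Rightarrow> real" where
  "generated_topology \<beta> A = finf {nbhd_degree \<beta> x A | x. x \<in> A}"

context
  fixes X :: "'a set" and \<beta> :: "'a set \<Rightarrow> real"
  assumes fuzzy: "fuzzy_subset_pow X \<beta>"
begin

lemma generated_topology_bounds:
  "A \<subseteq> X \<Longrightarrow> 0 \<le> generated_topology \<beta> A \<and> generated_topology \<beta> A \<le> 1"
  unfolding generated_topology_def
  using nbhd_degree_bounds[OF fuzzy] by (auto intro!: finf_nonneg finf_le_one)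

lemma generated_topology_le_nbhd_degree:
  "A \<subseteq> X \<Longrightarrow> x \<in> A \<Longrightarrow> generated_topology \<beta> A \<le> nbhd_degree \<beta> x A"
  unfolding generated_topology_def
  by (rule finf_lower) (auto simp: nbhd_degree_bounds[OF fuzzy])

lemma nbhd_degree_Int:
  assumes meet: "\<And>A B x. A \<subseteq> X \<Longrightarrow> B \<subseteq> X \<Longrightarrow> x \<in> A \<inter> B \<Longrightarrow>
                   min (\<beta> A) (\<beta> B) \<le> nbhd_degree \<beta> x (A \<inter> B)"
    and "A \<subseteq> X" "B \<subseteq> X"
  shows "min (nbhd_degree \<beta> x A) (nbhd_degree \<beta> x B) \<le> nbhd_degree \<beta> x (A \<inter> B)"
proof (rule ccontr)
  let ?c = "nbhd_degree \<beta> x (A \<inter> B)"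
  assume "\<not> ?thesis"
  then have less_A: "?c < nbhd_degree \<beta> x A" and less_B: "?c < nbhd_degree \<beta> x B" by auto
  have "0 \<le> ?c" using nbhd_degree_bounds[OF fuzzy, of "A \<inter> B" x] assms(2) by auto
  obtain D where D: "x \<in> D" "D \<subseteq> A" "?c < \<beta> D"
    by (rule less_nbhd_degreeE[OF fuzzy assms(2) less_A \<open>0 \<le> ?c\<close>])
  obtain E where E: "x \<in> E" "E \<subseteq> B" "?c < \<beta> E"
    by (rule less_nbhd_degreeE[OF fuzzy assms(3) less_B \<open>0 \<le> ?c\<close>])
  have "min (\<beta> D) (\<beta> E) \<le> nbhd_degree \<beta> x (D \<inter> E)"
    using D E assms(2,3) by (intro meet) auto
  also have "\<dots> \<le> ?c"
    using D E assms(2,3) by (intro nbhd_degree_mono[OF fuzzy]) auto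
  finally show False using D E by simp
qed

lemma fuzzifying_topology_generated_topology:
  assumes carrier: "\<forall>x\<in>X. nbhd_degree \<beta> x X = 1"
    and meet: "\<And>A B x. A \<subseteq> X \<Longrightarrow> B \<subseteq> X \<Longrightarrow> x \<in> A \<inter> B \<Longrightarrow>
                 min (\<beta> A) (\<beta> B) \<le> nbhd_degree \<beta> x (A \<inter> B)"
  shows "fuzzifying_topology X (generated_topology \<beta>)"
  unfolding fuzzifying_topology_def fuzzy_subset_pow_def
proof (intro conjI allI impI)
  let ?T = "generated_topology \<beta>"
  show "0 \<le> ?T A" "?T A \<le> 1" if "A \<subseteq> X" for A
    using generated_topology_bounds that by auto
  show "?T X = 1"
  proof (rule antisym)
    show "?T X \<le> 1" using generated_topology_bounds[of X] by simp
    show "1 \<le> ?T X"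
      unfolding generated_topology_def using carrier by (intro finf_greatest) auto
  qed
  show "min (?T A) (?T B) \<le> ?T (A \<inter> B)" if "A \<subseteq> X" "B \<subseteq> X" for A B
    unfolding generated_topology_def[of \<beta> "A \<inter> B"]
  proof (intro finf_greatest ballI)
    show "min (?T A) (?T B) \<le> 1"
      using generated_topology_bounds[OF that(1)] by (simp add: min.coboundedI1)
    fix s assume "s \<in> {nbhd_degree \<beta> x (A \<inter> B) | x. x \<in> A \<inter> B}"
    then obtain x where s: "s = nbhd_degree \<beta> x (A \<inter> B)" and x: "x \<in> A" "x \<in> B" by blast
    have "min (?T A) (?T B) \<le> min (nbhd_degree \<beta> x A) (nbhd_degree \<beta> x B)"
      using generated_topology_le_nbhd_degree[OF that(1) x(1)]
        generated_topology_le_nbhd_degree[OF that(2) x(2)]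
      by (rule min.mono)
    also have "\<dots> \<le> s"
      unfolding s by (rule nbhd_degree_Int[OF meet that])
    finally show "min (?T A) (?T B) \<le> s" .
  qed
  show "finf (?T ` F) \<le> ?T (\<Union>F)" if F: "F \<subseteq> Pow X" for F
    unfolding generated_topology_def[of \<beta> "\<Union>F"]
  proof (intro finf_greatest ballI)
    show "finf (?T ` F) \<le> 1"
      using F generated_topology_bounds by (intro finf_le_one) auto
    fix s assume "s \<in> {nbhd_degree \<beta> x (\<Union>F) | x. x \<in> \<Union>F}"
    then obtain x A where x: "s = nbhd_degree \<beta> x (\<Union>F)" "x \<in> A" "A \<in> F" by blast
    have A: "A \<subseteq> X" using x F by blast
    have "finf (?T ` F) \<le> ?T A"
      using x F generated_topology_bounds by (intro finf_lower) auto
    also have "\<dots> \<le> nbhd_degree \<beta> x A"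
      by (rule generated_topology_le_nbhd_degree[OF A x(2)])
    also have "\<dots> \<le> nbhd_degree \<beta> x (\<Union>F)"
      using x F by (intro nbhd_degree_mono[OF fuzzy]) auto
    finally show "finf (?T ` F) \<le> s" using x by simp
  qed
qed

lemma pre_base_generated_topology: "pre_base X \<beta> (generated_topology \<beta>)"
  unfolding pre_base_iff_nbhd_degree
proof (intro conjI allI impI)
  show "\<beta> A \<le> generated_topology \<beta> A" if "A \<subseteq> X" for A
    unfolding generated_topology_def
    using that fuzzy_subset_pow_bounds[OF fuzzy] nbhd_degree_upper[OF fuzzy that]
    by (auto intro!: finf_greatest)
  show "nbhd_degree (generated_topology \<beta>) x A \<le> nbhd_degree \<beta> x A" if "A \<subseteq> X" for x A
    unfolding nbhd_degree_def[of "generated_topology \<beta>"]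
  proof (intro fsup_least ballI)
    show "0 \<le> nbhd_degree \<beta> x A" using nbhd_degree_bounds[OF fuzzy that] by simp
    fix s assume "s \<in> {generated_topology \<beta> B | B. x \<in> B \<and> B \<subseteq> A}"
    then obtain B where B: "s = generated_topology \<beta> B" "x \<in> B" "B \<subseteq> A" by blast
    then have "s \<le> nbhd_degree \<beta> x B"
      using that by (simp add: generated_topology_le_nbhd_degree)
    also have "\<dots> \<le> nbhd_degree \<beta> x A"
      by (rule nbhd_degree_mono[OF fuzzy B(3) that])
    finally show "s \<le> nbhd_degree \<beta> x A" .
  qed
qed

end

theorem theorem2p2:
  fixes X :: "'a set" and \<beta> :: "'a set \<Rightarrow> real"
  assumes "fuzzy_subset_pow X \<beta>"
  shows "(\<exists>T. fuzzifying_topology X T \<and> pre_base X \<beta> T) \<longleftrightarrow>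
           (union_closure X \<beta> X = 1 \<and>
            (\<forall>A B x. A \<subseteq> X \<longrightarrow> B \<subseteq> X \<longrightarrow> x \<in> A \<inter> B \<longrightarrow>
               min (\<beta> A) (\<beta> B) \<le> fsup {\<beta> C | C. x \<in> C \<and> C \<subseteq> A \<inter> B}))"
  unfolding nbhd_degree_def[symmetric] union_closure_eq_one_iff[OF assms]
proof (intro iffI)
  assume "\<exists>T. fuzzifying_topology X T \<and> pre_base X \<beta> T"
  then obtain T where T: "fuzzifying_topology X T" "pre_base X \<beta> T" by (elim exE conjE)
  show "(\<forall>x\<in>X. nbhd_degree \<beta> x X = 1) \<and>
      (\<forall>A B x. A \<subseteq> X \<longrightarrow> B \<subseteq> X \<longrightarrow> x \<in> A \<inter> B \<longrightarrow>
         min (\<beta> A) (\<beta> B) \<le> nbhd_degree \<beta> x (A \<inter> B))"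
    by (intro conjI ballI allI impI pre_base_nbhd_degree_carrier[OF assms T]
          pre_base_min_le_nbhd_degree_Int[OF T])
next
  assume "(\<forall>x\<in>X. nbhd_degree \<beta> x X = 1) \<and>
      (\<forall>A B x. A \<subseteq> X \<longrightarrow> B \<subseteq> X \<longrightarrow> x \<in> A \<inter> B \<longrightarrow>
         min (\<beta> A) (\<beta> B) \<le> nbhd_degree \<beta> x (A \<inter> B))"
  then have "fuzzifying_topology X (generated_topology \<beta>)"
    by (intro fuzzifying_topology_generated_topology[OF assms]) auto
  with pre_base_generated_topology[OF assms]
  show "\<exists>T. fuzzifying_topology X T \<and> pre_base X \<beta> T" by auto
qed

end
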